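(* Let $q\ge 2$ and $n\ge 2$ be integers, with $n\ge 3$ if $q=2$. Then $\chi(H_q(n,2))=q^{n-1}$, and every proper $q^{n-1}$-coloring of $H_q(n,2)$ is even.
   Context: $\mathbb{Z}_q=\mathbb{Z}/q\mathbb{Z}$; for $x,y\in\mathbb{Z}_q^n$, $\mathrm{d}(x,y)=|\{i: x_i\neq y_i\}|$ is the Hamming distance. $H_q(n,d)$ is the simple undirected graph with vertex set $\mathbb{Z}_q^n$ in which $x,y$ are adjacent iff $\mathrm{d}(x,y)\ge d$. $\chi$ denotes the chromatic number. A coloring is called even if all its color classes have the same cardinality. *)

theory Defs
  imports Main
begin

text \<open>Vertex set of H_q(n,d): words of length n over Z_q = {0..<q}, represented as
  functions nat => nat which vanish outside {0..<n} (extensional representation).\<close>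
definition words :: "nat \<Rightarrow> nat \<Rightarrow> (nat \<Rightarrow> nat) set" where
  "words q n = {x. (\<forall>i<n. x i < q) \<and> (\<forall>i\<ge>n. x i = 0)}"

definition hdist :: "nat \<Rightarrow> (nat \<Rightarrow> nat) \<Rightarrow> (nat \<Rightarrow> nat) \<Rightarrow> nat" where
  "hdist n x y = card {i. i < n \<and> x i \<noteq> y i}"

definition H_adj :: "nat \<Rightarrow> nat \<Rightarrow> nat \<Rightarrow> (nat \<Rightarrow> nat) \<Rightarrow> (nat \<Rightarrow> nat) \<Rightarrow> bool" where
  "H_adj q n d x y \<longleftrightarrow> x \<in> words q n \<and> y \<in> words q n \<and> hdist n x y \<ge> d"

text \<open>A proper k-coloring of H_q(n,d): colors in {0..<k}, adjacent vertices get distinct colors.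
  (The graph is simple, so loops x = x are not edges; for d >= 1 hdist n x x = 0 < d anyway.)\<close>
definition proper_coloring :: "nat \<Rightarrow> nat \<Rightarrow> nat \<Rightarrow> nat \<Rightarrow> ((nat \<Rightarrow> nat) \<Rightarrow> nat) \<Rightarrow> bool" where
  "proper_coloring q n d k c \<longleftrightarrow>
     (\<forall>x\<in>words q n. c x < k) \<and>
     (\<forall>x y. x \<noteq> y \<and> H_adj q n d x y \<longrightarrow> c x \<noteq> c y)"

definition chromatic_number :: "nat \<Rightarrow> nat \<Rightarrow> nat \<Rightarrow> nat" where
  "chromatic_number q n d = (LEAST k. \<exists>c. proper_coloring q n d k c)"

definition even_coloring :: "nat \<Rightarrow> nat \<Rightarrow> nat \<Rightarrow> ((nat \<Rightarrow> nat) \<Rightarrow> nat) \<Rightarrow> bool" where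
  "even_coloring q n k c \<longleftrightarrow>
     (\<forall>j<k. \<forall>j'<k. card {x\<in>words q n. c x = j} = card {x\<in>words q n. c x = j'})"

end

theory Submission
  imports Defs "HOL-Library.FuncSet"
begin

text \<open>Two words of the same colour are at Hamming distance at most 1, and a set of words
  pairwise at distance at most 1 all differ from each other in one common coordinate, so a
  colour class has at most \<open>q\<close> elements. Hence at least \<open>q ^ n / q = q ^ (n - 1)\<close> colours are
  needed, and with exactly \<open>q ^ (n - 1)\<close> colours every class must be full. Colouring a word by
  its first \<open>n - 1\<close> coordinates attains the bound.\<close>

definition color_class :: "nat \<Rightarrow> nat \<Rightarrow> ((nat \<Rightarrow> nat) \<Rightarrow> nat) \<Rightarrow> nat \<Rightarrow> (nat \<Rightarrow> nat) set" where
  "color_class q n c j = {x \<in> words q n. c x = j}"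

lemma words_eqI:
  assumes "x \<in> words q n" "y \<in> words q n" "\<And>i. i < n \<Longrightarrow> x i = y i"
  shows "x = y"
proof
  fix i show "x i = y i"
    using assms by (cases "i < n") (auto simp: words_def)
qed

lemma finite_words: "finite (words q n)"
proof -
  have "words q n \<subseteq> (\<lambda>f i. if i < n then f i else 0) ` ({..<n} \<rightarrow>\<^sub>E {..<q})"
  proof
    fix x assume x: "x \<in> words q n"
    have "x = (\<lambda>i. if i < n then restrict x {..<n} i else 0)" using x by (auto simp: words_def)
    moreover have "restrict x {..<n} \<in> {..<n} \<rightarrow>\<^sub>E {..<q}" using x by (auto simp: words_def)
    ultimately show "x \<in> (\<lambda>f i. if i < n then f i else 0) ` ({..<n} \<rightarrow>\<^sub>E {..<q})" by blast
  qed
  thus ?thesis by (rule finite_subset) (intro finite_imageI finite_PiE; simp)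
qed

lemma card_words: "card (words q n) = q ^ n"
proof -
  have "bij_betw (\<lambda>x. restrict x {..<n}) (words q n) ({..<n} \<rightarrow>\<^sub>E {..<q})"
  proof (rule bij_betwI[where g = "\<lambda>f i. if i < n then f i else 0"])
    show "(\<lambda>x. restrict x {..<n}) \<in> words q n \<rightarrow> {..<n} \<rightarrow>\<^sub>E {..<q}"
      by (auto simp: words_def)
    show "(\<lambda>f i. if i < n then f i else 0) \<in> ({..<n} \<rightarrow>\<^sub>E {..<q}) \<rightarrow> words q n"
      by (auto simp: words_def PiE_def Pi_def)
  qed (auto simp: words_def PiE_def extensional_def)
  hence "card (words q n) = card ({..<n} \<rightarrow>\<^sub>E {..<q})" by (rule bij_betw_same_card)
  also have "\<dots> = q ^ n" by (simp add: card_PiE)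
  finally show ?thesis .
qed

lemma hdist_ge_2:
  assumes "i < n" "j < n" "i \<noteq> j" "x i \<noteq> y i" "x j \<noteq> y j"
  shows "hdist n x y \<ge> 2"
proof -
  have "{i, j} \<subseteq> {i. i < n \<and> x i \<noteq> y i}" using assms by auto
  hence "card {i, j} \<le> hdist n x y" unfolding hdist_def by (rule card_mono[rotated]) auto
  thus ?thesis using assms(3) by simp
qed

lemma hdist_le_1_if_agree_below:
  assumes "\<And>i. i < m \<Longrightarrow> x i = y i"
  shows "hdist (Suc m) x y \<le> 1"
proof -
  have "{i. i < Suc m \<and> x i \<noteq> y i} \<subseteq> {m}" using assms less_Suc_eq by auto
  hence "card {i. i < Suc m \<and> x i \<noteq> y i} \<le> card {m}" by (intro card_mono) auto
  thus ?thesis unfolding hdist_def by simp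
qed

lemma hdist_le_1_differ_in_one_coordinate:
  assumes "x \<in> words q n" "y \<in> words q n" "x \<noteq> y" "hdist n x y \<le> 1"
  obtains i where "i < n" "x i \<noteq> y i" "\<And>j. j < n \<Longrightarrow> j \<noteq> i \<Longrightarrow> x j = y j"
proof -
  obtain i where i: "i < n" "x i \<noteq> y i" using words_eqI[OF assms(1,2)] assms(3) by blast
  have "x j = y j" if "j < n" "j \<noteq> i" for j
    using hdist_ge_2[where x = x and y = y, OF i(1) that(1) that(2)[symmetric] i(2)] assms(4)
    by fastforce
  with i that show thesis by blast
qed

lemma card_le_if_pairwise_hdist_le_1:
  assumes S: "S \<subseteq> words q n" and close: "\<forall>x\<in>S. \<forall>y\<in>S. hdist n x y \<le> 1" and "q \<ge> 1"
  shows "card S \<le> q"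
proof (cases "\<exists>x\<in>S. \<exists>y\<in>S. x \<noteq> y")
  case False
  hence "card S \<le> 1" using card_le_Suc0_iff_eq finite_subset[OF S finite_words] by auto
  with \<open>q \<ge> 1\<close> show ?thesis by simp
next
  case True
  then obtain x y where xy: "x \<in> S" "y \<in> S" "x \<noteq> y" by blast
  then obtain i where i: "i < n" "x i \<noteq> y i" and xy_agree: "\<And>j. j < n \<Longrightarrow> j \<noteq> i \<Longrightarrow> x j = y j"
    using hdist_le_1_differ_in_one_coordinate[of x q n y] S close by blast
  \<comment> \<open>a word of \<open>S\<close> off \<open>x\<close> at some \<open>j \<noteq> i\<close> is at distance 2 from \<open>x\<close> or, if it agrees with \<open>x\<close> at \<open>i\<close>, from \<open>y\<close>\<close>
  have agree: "z j = x j" if z: "z \<in> S" and j: "j < n" "j \<noteq> i" for z j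
  proof (rule ccontr)
    assume ne: "z j \<noteq> x j"
    show False
    proof (cases "z i = x i")
      case False
      with hdist_ge_2[where x = x and y = z, OF i(1) j(1) j(2)[symmetric]] ne
      have "hdist n x z \<ge> 2" by auto
      with close xy(1) z show False by fastforce
    next
      case True
      with hdist_ge_2[where x = z and y = y, OF i(1) j(1) j(2)[symmetric]] ne i(2) xy_agree[OF j]
      have "hdist n z y \<ge> 2" by auto
      with close xy(2) z show False by fastforce
    qed
  qed
  have "inj_on (\<lambda>z. z i) S"
  proof (rule inj_onI)
    fix z z' assume zz': "z \<in> S" "z' \<in> S" "z i = z' i"
    show "z = z'"
    proof (rule words_eqI[of _ q n])
      show "z \<in> words q n" "z' \<in> words q n" using zz' S by auto
      fix j assume "j < n"
      thus "z j = z' j" using agree[OF zz'(1)] agree[OF zz'(2)] zz'(3) by (cases "j = i") auto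
    qed
  qed
  moreover have "(\<lambda>z. z i) ` S \<subseteq> {..<q}" using S i(1) by (auto simp: words_def)
  ultimately have "card S \<le> card {..<q}" by (intro card_inj_on_le) auto
  thus ?thesis by simp
qed

lemma same_color_hdist_le_1:
  assumes "proper_coloring q n 2 k c" "x \<in> color_class q n c j" "y \<in> color_class q n c j"
  shows "hdist n x y \<le> 1"
proof (rule ccontr)
  assume "\<not> hdist n x y \<le> 1"
  with assms(2,3) have "x \<noteq> y \<and> H_adj q n 2 x y"
    by (auto simp: H_adj_def hdist_def color_class_def)
  with assms(1) have "c x \<noteq> c y" unfolding proper_coloring_def by blast
  with assms(2,3) show False by (simp add: color_class_def)
qed

lemma card_color_class_le:
  assumes "proper_coloring q n 2 k c" "q \<ge> 1"
  shows "card (color_class q n c j) \<le> q"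
  using card_le_if_pairwise_hdist_le_1[of "color_class q n c j" q n] same_color_hdist_le_1[OF assms(1)]
    assms(2) by (auto simp: color_class_def)

lemma sum_card_color_classes:
  assumes "proper_coloring q n d k c"
  shows "(\<Sum>j<k. card (color_class q n c j)) = q ^ n"
proof -
  have "words q n = (\<Union>j<k. color_class q n c j)"
    using assms by (auto simp: proper_coloring_def color_class_def)
  hence "q ^ n = card (\<Union>j<k. color_class q n c j)" by (metis card_words)
  also have "\<dots> = (\<Sum>j<k. card (color_class q n c j))"
    by (rule card_UN_disjoint) (auto simp: color_class_def finite_words)
  finally show ?thesis by simp
qed

lemma proper_coloring_lower_bound:
  assumes "proper_coloring q n 2 k c" "q \<ge> 1" "n \<ge> 1"
  shows "q ^ (n - 1) \<le> k"
proof -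
  have "q * q ^ (n - 1) = (\<Sum>j<k. card (color_class q n c j))"
    using sum_card_color_classes[OF assms(1)] assms(3) by (simp add: power_eq_if)
  also have "\<dots> \<le> q * k"
    using sum_mono[of "{..<k}" "\<lambda>j. card (color_class q n c j)" "\<lambda>_. q"]
      card_color_class_le[OF assms(1,2)] by (simp add: mult.commute)
  finally show ?thesis using assms(2) by simp
qed

lemma card_color_class_eq:
  assumes "proper_coloring q n 2 (q ^ (n - 1)) c" "q \<ge> 1" "n \<ge> 1" "j < q ^ (n - 1)"
  shows "card (color_class q n c j) = q"
proof (rule ccontr)
  assume "card (color_class q n c j) \<noteq> q"
  with card_color_class_le[OF assms(1,2)] have "card (color_class q n c j) < q"
    using le_neq_implies_less by blast
  hence "(\<Sum>j<q ^ (n - 1). card (color_class q n c j)) < (\<Sum>j<q ^ (n - 1). q)"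
    using card_color_class_le[OF assms(1,2)] assms(4) by (intro sum_strict_mono_ex1) auto
  also have "\<dots> = q ^ n" using assms(3) by (simp add: power_eq_if)
  finally show False using sum_card_color_classes[OF assms(1)] by simp
qed

lemma proper_coloring_by_prefix:
  assumes "n \<ge> 1"
  obtains c where "proper_coloring q n 2 (q ^ (n - 1)) c"
proof -
  define prefix where "prefix x = (\<lambda>i. if i < n - 1 then x i else 0)" for x :: "nat \<Rightarrow> nat"
  obtain h where h: "bij_betw h (words q (n - 1)) {0..<q ^ (n - 1)}"
    using ex_bij_betw_finite_nat[OF finite_words] unfolding card_words by blast
  have prefix_words: "prefix x \<in> words q (n - 1)" if "x \<in> words q n" for x
    using that assms by (auto simp: words_def prefix_def)
  have "proper_coloring q n 2 (q ^ (n - 1)) (h \<circ> prefix)"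
    unfolding proper_coloring_def
  proof (intro conjI allI impI ballI)
    fix x assume "x \<in> words q n"
    thus "(h \<circ> prefix) x < q ^ (n - 1)" using prefix_words h by (auto dest: bij_betwE)
  next
    fix x y assume xy: "x \<noteq> y \<and> H_adj q n 2 x y"
    show "(h \<circ> prefix) x \<noteq> (h \<circ> prefix) y"
    proof
      assume "(h \<circ> prefix) x = (h \<circ> prefix) y"
      with h prefix_words xy have "prefix x = prefix y"
        by (auto simp: H_adj_def bij_betw_def inj_on_def)
      have "x i = y i" if "i < n - 1" for i
      proof -
        have "prefix x i = prefix y i" by (simp add: \<open>prefix x = prefix y\<close>)
        with that show ?thesis by (simp add: prefix_def)
      qed
      hence "hdist (Suc (n - 1)) x y \<le> 1" by (rule hdist_le_1_if_agree_below)
      with xy assms show False by (simp add: H_adj_def)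
    qed
  qed
  thus thesis by (rule that)
qed

theorem proposition3p6:
  fixes q n :: nat
  assumes "q \<ge> 2" and "n \<ge> 2" and "q = 2 \<longrightarrow> n \<ge> 3"
  shows "chromatic_number q n 2 = q ^ (n - 1) \<and>
         (\<forall>c. proper_coloring q n 2 (q ^ (n - 1)) c \<longrightarrow> even_coloring q n (q ^ (n - 1)) c)"
proof
  have q: "q \<ge> 1" and n: "n \<ge> 1" using assms(1,2) by auto
  show "chromatic_number q n 2 = q ^ (n - 1)"
    unfolding chromatic_number_def
  proof (rule Least_equality)
    show "\<exists>c. proper_coloring q n 2 (q ^ (n - 1)) c" using proper_coloring_by_prefix[OF n] by blast
  qed (use proper_coloring_lower_bound[OF _ q n] in blast)
  show "\<forall>c. proper_coloring q n 2 (q ^ (n - 1)) c \<longrightarrow> even_coloring q n (q ^ (n - 1)) c"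
    using card_color_class_eq[OF _ q n] by (simp add: even_coloring_def color_class_def)
qed

end
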